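(* Let $\mathbf A=(A;\cdot,\to,\leadsto,1)$ be a pseudo-hoop and let $F\subseteq A$ be a filter that has a least element. Then $F$ is a normal filter.
   Context: A pseudo-hoop is an algebra $(A;\cdot,\to,\leadsto,1)$ of type $\langle 2,2,2,0\rangle$ such that for all $x,y,z\in A$: $x\cdot 1=x=1\cdot x$; $x\to x=1=x\leadsto x$; $(x\cdot y)\to z=x\to(y\to z)$; $(x\cdot y)\leadsto z=y\leadsto(x\leadsto z)$; and $(x\to y)\cdot x=(y\to x)\cdot y=x\cdot(x\leadsto y)=y\cdot(y\leadsto x)$. Setting $x\le y$ iff $x\to y=1$ gives a partial order with greatest element $1$. A filter is a nonempty upward closed subset closed under $\cdot$. A filter $F$ is normal if for all $x,y\in A$: $x\to y\in F$ iff $x\leadsto y\in F$. *)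

theory Defs
  imports Main
begin

definition pseudo_hoop ::
  "'a set \<Rightarrow> ('a \<Rightarrow> 'a \<Rightarrow> 'a) \<Rightarrow> ('a \<Rightarrow> 'a \<Rightarrow> 'a) \<Rightarrow> ('a \<Rightarrow> 'a \<Rightarrow> 'a) \<Rightarrow> 'a \<Rightarrow> bool" where
  "pseudo_hoop A m imp imp2 one \<longleftrightarrow>
     one \<in> A \<and>
     (\<forall>x\<in>A. \<forall>y\<in>A. m x y \<in> A \<and> imp x y \<in> A \<and> imp2 x y \<in> A) \<and>
     (\<forall>x\<in>A. m x one = x \<and> m one x = x) \<and>
     (\<forall>x\<in>A. imp x x = one \<and> imp2 x x = one) \<and>
     (\<forall>x\<in>A. \<forall>y\<in>A. \<forall>z\<in>A. imp (m x y) z = imp x (imp y z)) \<and>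
     (\<forall>x\<in>A. \<forall>y\<in>A. \<forall>z\<in>A. imp2 (m x y) z = imp2 y (imp2 x z)) \<and>
     (\<forall>x\<in>A. \<forall>y\<in>A.
        m (imp x y) x = m (imp y x) y \<and>
        m (imp y x) y = m x (imp2 x y) \<and>
        m x (imp2 x y) = m y (imp2 y x))"

definition ph_le :: "('a \<Rightarrow> 'a \<Rightarrow> 'a) \<Rightarrow> 'a \<Rightarrow> 'a \<Rightarrow> 'a \<Rightarrow> bool" where
  "ph_le imp one x y \<longleftrightarrow> imp x y = one"

definition ph_filter ::
  "'a set \<Rightarrow> ('a \<Rightarrow> 'a \<Rightarrow> 'a) \<Rightarrow> ('a \<Rightarrow> 'a \<Rightarrow> 'a) \<Rightarrow> 'a \<Rightarrow> 'a set \<Rightarrow> bool" where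
  "ph_filter A m imp one F \<longleftrightarrow>
     F \<subseteq> A \<and> F \<noteq> {} \<and>
     (\<forall>x\<in>F. \<forall>y\<in>A. ph_le imp one x y \<longrightarrow> y \<in> F) \<and>
     (\<forall>x\<in>F. \<forall>y\<in>F. m x y \<in> F)"

definition ph_normal_filter ::
  "'a set \<Rightarrow> ('a \<Rightarrow> 'a \<Rightarrow> 'a) \<Rightarrow> ('a \<Rightarrow> 'a \<Rightarrow> 'a) \<Rightarrow> ('a \<Rightarrow> 'a \<Rightarrow> 'a) \<Rightarrow> 'a \<Rightarrow> 'a set \<Rightarrow> bool" where
  "ph_normal_filter A m imp imp2 one F \<longleftrightarrow>
     ph_filter A m imp one F \<and>
     (\<forall>x\<in>A. \<forall>y\<in>A. imp x y \<in> F \<longleftrightarrow> imp2 x y \<in> F)"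

end

theory Submission
  imports Defs
begin

text \<open>If \<open>a\<close> is the least element of \<open>F\<close>, then \<open>a \<cdot> a \<in> F\<close> forces \<open>a\<close> to be idempotent and
  \<open>F\<close> is the up-set of \<open>a\<close>. An idempotent commutes with every element, so by residuation
  \<open>a \<le> x \<rightarrow> y \<longleftrightarrow> a \<cdot> x \<le> y \<longleftrightarrow> x \<cdot> a \<le> y \<longleftrightarrow> a \<le> x \<leadsto> y\<close>.\<close>

locale pseudo_hoop_alg =
  fixes A :: "'a set"
    and m :: "'a \<Rightarrow> 'a \<Rightarrow> 'a" (infixl "\<cdot>" 70)
    and imp :: "'a \<Rightarrow> 'a \<Rightarrow> 'a" (infixr "\<rightarrow>" 60)
    and imp2 :: "'a \<Rightarrow> 'a \<Rightarrow> 'a" (infixr "\<leadsto>" 60)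
    and one :: 'a ("\<one>")
  assumes one_closed: "\<one> \<in> A"
    and mult_closed: "x \<in> A \<Longrightarrow> y \<in> A \<Longrightarrow> x \<cdot> y \<in> A"
    and imp_closed: "x \<in> A \<Longrightarrow> y \<in> A \<Longrightarrow> (x \<rightarrow> y) \<in> A"
    and imp2_closed: "x \<in> A \<Longrightarrow> y \<in> A \<Longrightarrow> (x \<leadsto> y) \<in> A"
    and mult_one_right: "x \<in> A \<Longrightarrow> x \<cdot> \<one> = x"
    and mult_one_left: "x \<in> A \<Longrightarrow> \<one> \<cdot> x = x"
    and imp_self: "x \<in> A \<Longrightarrow> (x \<rightarrow> x) = \<one>"
    and imp2_self: "x \<in> A \<Longrightarrow> (x \<leadsto> x) = \<one>"
    and imp_mult: "x \<in> A \<Longrightarrow> y \<in> A \<Longrightarrow> z \<in> A \<Longrightarrow> (x \<cdot> y \<rightarrow> z) = (x \<rightarrow> y \<rightarrow> z)"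
    and imp2_mult: "x \<in> A \<Longrightarrow> y \<in> A \<Longrightarrow> z \<in> A \<Longrightarrow> (x \<cdot> y \<leadsto> z) = (y \<leadsto> x \<leadsto> z)"
    and divisibility_imp: "x \<in> A \<Longrightarrow> y \<in> A \<Longrightarrow> (x \<rightarrow> y) \<cdot> x = (y \<rightarrow> x) \<cdot> y"
    and divisibility_imp_imp2: "x \<in> A \<Longrightarrow> y \<in> A \<Longrightarrow> (y \<rightarrow> x) \<cdot> y = x \<cdot> (x \<leadsto> y)"
    and divisibility_imp2: "x \<in> A \<Longrightarrow> y \<in> A \<Longrightarrow> x \<cdot> (x \<leadsto> y) = y \<cdot> (y \<leadsto> x)"
begin

abbreviation le :: "'a \<Rightarrow> 'a \<Rightarrow> bool" (infix "\<preceq>" 50)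
  where "x \<preceq> y \<equiv> (x \<rightarrow> y) = \<one>"

lemma le_antisym: "x \<in> A \<Longrightarrow> y \<in> A \<Longrightarrow> x \<preceq> y \<Longrightarrow> y \<preceq> x \<Longrightarrow> x = y"
  using divisibility_imp[of x y] by (simp add: mult_one_left)

lemma imp_one_left:
  assumes "x \<in> A"
  shows "(\<one> \<rightarrow> x) = x"
proof (rule le_antisym)
  have "((\<one> \<rightarrow> x) \<rightarrow> x) = ((\<one> \<rightarrow> x) \<cdot> \<one> \<rightarrow> x)"
    using mult_one_right imp_closed one_closed assms by simp
  also have "\<dots> = \<one>"
    using imp_mult imp_self imp_closed one_closed assms by simp
  finally show "(\<one> \<rightarrow> x) \<preceq> x" .
  show "x \<preceq> (\<one> \<rightarrow> x)"
    using imp_mult[of x \<one> x] mult_one_right imp_self one_closed assms by simp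
qed (use imp_closed one_closed assms in auto)

lemma imp_one_right:
  assumes "x \<in> A"
  shows "(x \<rightarrow> \<one>) = \<one>"
proof -
  have "(x \<rightarrow> \<one>) = ((\<one> \<rightarrow> x) \<cdot> \<one> \<rightarrow> \<one>)"
    using imp_one_left mult_one_right assms by simp
  also have "\<dots> = ((x \<rightarrow> \<one>) \<cdot> x \<rightarrow> \<one>)"
    using divisibility_imp[of \<one> x] one_closed assms by simp
  also have "\<dots> = \<one>"
    using imp_mult imp_self imp_closed one_closed assms by simp
  finally show ?thesis .
qed

lemma le_imp2_absorb:
  assumes "x \<in> A" "y \<in> A" "x \<preceq> y"
  shows "x \<cdot> (x \<leadsto> y) = x"
proof -
  have "x = (x \<rightarrow> y) \<cdot> x"
    using assms by (simp add: mult_one_left)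
  also have "\<dots> = x \<cdot> (x \<leadsto> y)"
    using divisibility_imp[OF assms(1,2)] divisibility_imp_imp2[OF assms(1,2)] by (rule trans)
  finally show ?thesis by (rule sym)
qed

lemma le_iff_imp2_eq_one:
  assumes "x \<in> A" "y \<in> A"
  shows "x \<preceq> y \<longleftrightarrow> (x \<leadsto> y) = \<one>"
proof
  assume "x \<preceq> y"
  then have "(x \<leadsto> y) = (x \<cdot> (x \<leadsto> y) \<leadsto> y)"
    using le_imp2_absorb assms by simp
  also have "\<dots> = \<one>"
    using imp2_mult imp2_self imp2_closed assms by simp
  finally show "(x \<leadsto> y) = \<one>" .
next
  assume "(x \<leadsto> y) = \<one>"
  have "(x \<rightarrow> y) \<cdot> x = x \<cdot> (x \<leadsto> y)"
    using divisibility_imp[OF assms] divisibility_imp_imp2[OF assms] by (rule trans)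
  also have "\<dots> = x"
    using \<open>(x \<leadsto> y) = \<one>\<close> mult_one_right assms by simp
  finally have "(x \<rightarrow> y) \<cdot> x = x" .
  then have "(x \<rightarrow> y) = ((x \<rightarrow> y) \<cdot> x \<rightarrow> y)"
    by simp
  also have "\<dots> = \<one>"
    using imp_mult imp_self imp_closed assms by simp
  finally show "x \<preceq> y" .
qed

lemma imp2_one_right: "x \<in> A \<Longrightarrow> (x \<leadsto> \<one>) = \<one>"
  using le_iff_imp2_eq_one[of x \<one>] imp_one_right one_closed by simp

lemma le_trans:
  assumes "x \<in> A" "y \<in> A" "z \<in> A" "x \<preceq> y" "y \<preceq> z"
  shows "x \<preceq> z"
proof -
  have "x = (y \<rightarrow> x) \<cdot> y"
    using divisibility_imp[of x y] assms by (simp add: mult_one_left)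
  then have "(x \<rightarrow> z) = ((y \<rightarrow> x) \<cdot> y \<rightarrow> z)"
    by simp
  also have "\<dots> = \<one>"
    using imp_mult imp_closed imp_one_right assms by simp
  finally show ?thesis .
qed

lemma le_imp_iff_mult_le:
  "x \<in> A \<Longrightarrow> y \<in> A \<Longrightarrow> z \<in> A \<Longrightarrow> x \<preceq> (y \<rightarrow> z) \<longleftrightarrow> x \<cdot> y \<preceq> z"
  by (simp add: imp_mult)

lemma le_imp2_iff_mult_le:
  assumes "x \<in> A" "y \<in> A" "z \<in> A"
  shows "y \<preceq> (x \<leadsto> z) \<longleftrightarrow> x \<cdot> y \<preceq> z"
  using le_iff_imp2_eq_one imp2_mult imp2_closed mult_closed assms by simp

lemma mult_le_left: "x \<in> A \<Longrightarrow> y \<in> A \<Longrightarrow> x \<cdot> y \<preceq> x"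
  using le_iff_imp2_eq_one imp2_mult imp2_self imp2_one_right mult_closed by simp

lemma mult_le_right: "x \<in> A \<Longrightarrow> y \<in> A \<Longrightarrow> x \<cdot> y \<preceq> y"
  by (simp add: imp_mult imp_self imp_one_right)

lemma mult_right_mono:
  assumes "x \<in> A" "y \<in> A" "c \<in> A" "x \<preceq> y"
  shows "x \<cdot> c \<preceq> y \<cdot> c"
proof -
  have "y \<preceq> (c \<rightarrow> y \<cdot> c)"
    using le_imp_iff_mult_le[of y c "y \<cdot> c"] imp_self mult_closed assms by simp
  then have "x \<preceq> (c \<rightarrow> y \<cdot> c)"
    using le_trans[of x y "c \<rightarrow> y \<cdot> c"] imp_closed mult_closed assms by simp
  then show ?thesis
    using le_imp_iff_mult_le[of x c "y \<cdot> c"] mult_closed assms by simp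
qed

lemma mult_left_mono:
  assumes "x \<in> A" "y \<in> A" "c \<in> A" "x \<preceq> y"
  shows "c \<cdot> x \<preceq> c \<cdot> y"
proof -
  have "y \<preceq> (c \<leadsto> c \<cdot> y)"
    using le_imp2_iff_mult_le[of c y "c \<cdot> y"] imp_self mult_closed assms by simp
  then have "x \<preceq> (c \<leadsto> c \<cdot> y)"
    using le_trans[of x y "c \<leadsto> c \<cdot> y"] imp2_closed mult_closed assms by simp
  then show ?thesis
    using le_imp2_iff_mult_le[of c x "c \<cdot> y"] mult_closed assms by simp
qed

lemma eq_if_same_imps:
  assumes "u \<in> A" "v \<in> A" "\<And>w. w \<in> A \<Longrightarrow> (u \<rightarrow> w) = (v \<rightarrow> w)"
  shows "u = v"
proof (rule le_antisym[OF assms(1,2)])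
  show "u \<preceq> v"
    using assms(3)[of v] imp_self assms by simp
  show "v \<preceq> u"
    using assms(3)[of u] imp_self assms by simp
qed

lemma mult_assoc:
  assumes "x \<in> A" "y \<in> A" "z \<in> A"
  shows "x \<cdot> y \<cdot> z = x \<cdot> (y \<cdot> z)"
  by (rule eq_if_same_imps) (use assms in \<open>simp_all add: mult_closed imp_closed imp_mult\<close>)

lemma idempotent_absorbs_below:
  assumes "a \<in> A" "a \<cdot> a = a" "z \<in> A" "z \<preceq> a"
  shows "z \<cdot> a = z" and "a \<cdot> z = z"
proof -
  have z_right: "z = (a \<rightarrow> z) \<cdot> a"
    using divisibility_imp[of a z] assms by (simp add: mult_one_left)
  have z_left: "z = a \<cdot> (a \<leadsto> z)"
    using divisibility_imp_imp2[of a z] assms by (simp add: mult_one_left)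
  have "z \<cdot> a = (a \<rightarrow> z) \<cdot> (a \<cdot> a)"
    using z_right mult_assoc imp_closed assms by metis
  then show "z \<cdot> a = z"
    using z_right assms by simp
  have "a \<cdot> z = a \<cdot> a \<cdot> (a \<leadsto> z)"
    using z_left mult_assoc imp2_closed assms by metis
  then show "a \<cdot> z = z"
    using z_left assms by simp
qed

lemma idempotent_commute:
  assumes "a \<in> A" "a \<cdot> a = a" "x \<in> A"
  shows "a \<cdot> x = x \<cdot> a"
proof -
  have ax: "a \<cdot> x \<in> A" and xa: "x \<cdot> a \<in> A"
    using mult_closed assms by auto
  have "a \<cdot> x = a \<cdot> x \<cdot> a"
    using idempotent_absorbs_below(1)[OF assms(1,2) ax] mult_le_left assms by simp
  also have "\<dots> \<preceq> x \<cdot> a"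
    using mult_right_mono[OF ax assms(3,1)] mult_le_right assms by simp
  finally have "a \<cdot> x \<preceq> x \<cdot> a" .
  moreover have "x \<cdot> a = a \<cdot> (x \<cdot> a)"
    using idempotent_absorbs_below(2)[OF assms(1,2) xa] mult_le_right assms by simp
  then have "x \<cdot> a \<preceq> a \<cdot> x"
    using mult_left_mono[OF xa assms(3,1)] mult_le_left assms by simp
  ultimately show ?thesis
    using le_antisym ax xa by blast
qed

lemma idempotent_le_imp_iff_le_imp2:
  assumes "a \<in> A" "a \<cdot> a = a" "x \<in> A" "y \<in> A"
  shows "a \<preceq> (x \<rightarrow> y) \<longleftrightarrow> a \<preceq> (x \<leadsto> y)"
proof -
  have "a \<preceq> (x \<rightarrow> y) \<longleftrightarrow> a \<cdot> x \<preceq> y"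
    using le_imp_iff_mult_le assms by simp
  also have "\<dots> \<longleftrightarrow> x \<cdot> a \<preceq> y"
    using idempotent_commute[of a x] assms by simp
  also have "\<dots> \<longleftrightarrow> a \<preceq> (x \<leadsto> y)"
    using le_imp2_iff_mult_le assms by simp
  finally show ?thesis .
qed

lemma least_of_filter_idempotent:
  assumes "ph_filter A m imp one F" "a \<in> F" "\<forall>x\<in>F. a \<preceq> x"
  shows "a \<cdot> a = a"
proof -
  have "a \<in> A" and "a \<cdot> a \<in> F"
    using assms unfolding ph_filter_def by auto
  then show ?thesis
    using le_antisym mult_closed mult_le_left assms(3) by blast
qed

lemma filter_eq_up_set_of_least:
  assumes "ph_filter A m imp one F" "a \<in> F" "\<forall>x\<in>F. a \<preceq> x"
  shows "F = {t \<in> A. a \<preceq> t}"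
  using assms unfolding ph_filter_def ph_le_def by blast

lemma up_set_of_idempotent_normal:
  assumes "ph_filter A m imp one F" "a \<in> A" "a \<cdot> a = a" "F = {t \<in> A. a \<preceq> t}"
  shows "ph_normal_filter A m imp imp2 one F"
  using assms idempotent_le_imp_iff_le_imp2 imp_closed imp2_closed
  unfolding ph_normal_filter_def by auto

end

lemma pseudo_hoop_alg_if_pseudo_hoop:
  "pseudo_hoop A m imp imp2 one \<Longrightarrow> pseudo_hoop_alg A m imp imp2 one"
  unfolding pseudo_hoop_def by unfold_locales auto

theorem lemma4p5:
  assumes "pseudo_hoop A m imp imp2 one"
    and "ph_filter A m imp one F"
    and "\<exists>a\<in>F. \<forall>x\<in>F. ph_le imp one a x"
  shows "ph_normal_filter A m imp imp2 one F"
proof -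
  interpret pseudo_hoop_alg A m imp imp2 one
    using assms(1) by (rule pseudo_hoop_alg_if_pseudo_hoop)
  obtain a where a: "a \<in> F" and least: "\<forall>x\<in>F. imp a x = one"
    using assms(3) unfolding ph_le_def by blast
  have "a \<in> A"
    using assms(2) a unfolding ph_filter_def by blast
  moreover have "m a a = a"
    using least_of_filter_idempotent assms(2) a least .
  moreover have "F = {t \<in> A. imp a t = one}"
    using filter_eq_up_set_of_least assms(2) a least .
  ultimately show ?thesis
    using up_set_of_idempotent_normal assms(2) by blast
qed

end
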